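(* Let $N\geqslant 2$, $d\geqslant 1$ and $1\leqslant r\leqslant N$ be integers. Let $l_0,\dots,l_r$ be linearly independent linear forms on ${\mathbb C}^{N+1}$ and $\Pi=\{l_0=\dots=l_r=0\}\subset{\mathbb P}^N$. For each $i=1,\dots,r$ fix pairwise distinct constants $\lambda_{i0},\dots,\lambda_{i,d-1}\in{\mathbb C}$ with $\lambda_{i0}=0$. For $\underline e=(e_1,\dots,e_r)\in{\mathbb Z}^r_{\geqslant0}$ with all $e_i\leqslant d-1$ let $\Theta(\underline e)=\{l_i-\lambda_{i,e_i}l_0=0,\ i=1,\dots,r\}\subset{\mathbb P}^N$ (a linear subspace of codimension $r$ containing $\Pi$), and $|\underline e|=e_1+\dots+e_r$. Let $m\leqslant N-r+1$, and for every $\underline e$ with $|\underline e|\leqslant d-3$ let $S(\underline e)\subset\Theta(\underline e)\setminus\Pi$ be a set of $m$ linearly independent points. Then the set of $g\in{\cal P}_{d,N+1}$ satisfying $S(\underline e)\subset\mathop{\rm Sing}(g|_{\Theta(\underline e)})$ for all $\underline e\in{\mathbb Z}^r_{\geqslant0}$ with $|\underline e|\leqslant d-3$ is a linear subspace of ${\cal P}_{d,N+1}$ of codimension $m(N-r+1)|\Delta|$, where $\Delta=\{e_1\geqslant0,\dots,e_r\geqslant0,\ e_1+\dots+e_r\leqslant d-3\}\subset{\mathbb R}^r$ and $|\Delta|=\#(\Delta\cap{\mathbb Z}^r)$.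
   Context: ${\cal P}_{d,N+1}$ is the complex vector space of homogeneous polynomials of degree $d$ in $x_0,\dots,x_N$. For a linear subspace $\Theta\cong{\mathbb P}^{N-r}$, $\mathop{\rm Sing}(g|_\Theta)$ is the singular set of the hypersurface $\{g|_\Theta=0\}$ in $\Theta$, equal to $\Theta$ if $g|_\Theta\equiv0$. *)

theory Defs
  imports Complex_Main "HOL-Library.Function_Algebras"
begin

text \<open>Vectors of C^(N+1) are functions nat => complex (coordinates 0..N are used).
 A homogeneous polynomial of degree d in x_0..x_N is represented by its coefficient
 function on exponent vectors (nat => nat), supported on the degree-d monomials.\<close>

definition cscale :: "complex \<Rightarrow> ('a \<Rightarrow> complex) \<Rightarrow> ('a \<Rightarrow> complex)" where
  "cscale a f = (\<lambda>x. a * f x)"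

lemma vector_space_cscale: "vector_space cscale"
  by unfold_locales (auto simp: cscale_def fun_eq_iff algebra_simps)

definition mons :: "nat \<Rightarrow> nat \<Rightarrow> (nat \<Rightarrow> nat) set" where
  "mons N d = {\<alpha>. (\<forall>j. N < j \<longrightarrow> \<alpha> j = 0) \<and> (\<Sum>j\<le>N. \<alpha> j) = d}"

definition Pspace :: "nat \<Rightarrow> nat \<Rightarrow> ((nat \<Rightarrow> nat) \<Rightarrow> complex) set" where
  "Pspace N d = {g. \<forall>\<alpha>. \<alpha> \<notin> mons N d \<longrightarrow> g \<alpha> = 0}"

definition peval :: "nat \<Rightarrow> nat \<Rightarrow> ((nat \<Rightarrow> nat) \<Rightarrow> complex) \<Rightarrow> (nat \<Rightarrow> complex) \<Rightarrow> complex" where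
  "peval N d g x = (\<Sum>\<alpha>\<in>mons N d. g \<alpha> * (\<Prod>k\<le>N. x k ^ \<alpha> k))"

definition pderiv_at :: "nat \<Rightarrow> nat \<Rightarrow> ((nat \<Rightarrow> nat) \<Rightarrow> complex) \<Rightarrow> nat \<Rightarrow> (nat \<Rightarrow> complex) \<Rightarrow> complex" where
  "pderiv_at N d g j x = (\<Sum>\<alpha>\<in>mons N d. g \<alpha> *
      (of_nat (\<alpha> j) * x j ^ (\<alpha> j - 1) * (\<Prod>k\<in>{..N} - {j}. x k ^ \<alpha> k)))"

definition ddir :: "nat \<Rightarrow> nat \<Rightarrow> ((nat \<Rightarrow> nat) \<Rightarrow> complex) \<Rightarrow> (nat \<Rightarrow> complex) \<Rightarrow> (nat \<Rightarrow> complex) \<Rightarrow> complex" where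
  "ddir N d g x v = (\<Sum>j\<le>N. v j * pderiv_at N d g j x)"

definition linf :: "nat \<Rightarrow> (nat \<Rightarrow> complex) \<Rightarrow> (nat \<Rightarrow> complex) \<Rightarrow> complex" where
  "linf N a x = (\<Sum>j\<le>N. a j * x j)"

text \<open>The point [p] (p in the cone V of a linear subspace Theta of P^N) lies in
 Sing(g|Theta): g(p)=0 and all derivatives of g|Theta vanish at p, i.e. Dg(p)(v)=0
 for all v in V.  (If g|Theta = 0 this holds for every p, giving Sing = Theta.)\<close>
definition sing_at :: "nat \<Rightarrow> nat \<Rightarrow> ((nat \<Rightarrow> nat) \<Rightarrow> complex) \<Rightarrow> (nat \<Rightarrow> complex) set \<Rightarrow> (nat \<Rightarrow> complex) \<Rightarrow> bool" where
  "sing_at N d g V p \<longleftrightarrow> p \<in> V \<and> peval N d g p = 0 \<and> (\<forall>v\<in>V. ddir N d g p v = 0)"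

definition lin_indep :: "nat \<Rightarrow> nat \<Rightarrow> (nat \<Rightarrow> nat \<Rightarrow> complex) \<Rightarrow> bool" where
  "lin_indep N n u \<longleftrightarrow> (\<forall>c. (\<forall>j\<le>N. (\<Sum>k<n. c k * u k j) = 0) \<longrightarrow> (\<forall>k<n. c k = 0))"

text \<open>cone over Theta(e) = {l_i - lambda_{i,e_i} l_0 = 0, i=1..r}\<close>
definition Theta_cone :: "nat \<Rightarrow> nat \<Rightarrow> (nat \<Rightarrow> nat \<Rightarrow> complex) \<Rightarrow> (nat \<Rightarrow> nat \<Rightarrow> complex)
     \<Rightarrow> (nat \<Rightarrow> nat) \<Rightarrow> (nat \<Rightarrow> complex) set" where
  "Theta_cone N r l lam e = {x. (\<forall>j. N < j \<longrightarrow> x j = 0) \<and>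
      (\<forall>i\<in>{1..r}. linf N (l i) x - lam i (e i) * linf N (l 0) x = 0)}"

definition Pi_cone :: "nat \<Rightarrow> nat \<Rightarrow> (nat \<Rightarrow> nat \<Rightarrow> complex) \<Rightarrow> (nat \<Rightarrow> complex) set" where
  "Pi_cone N r l = {x. (\<forall>j. N < j \<longrightarrow> x j = 0) \<and> (\<forall>i\<le>r. linf N (l i) x = 0)}"

text \<open>lattice points of Delta: e in Z^r_{>=0} (stored as nat => nat, zero outside 1..r)
 with e_1+...+e_r <= d-3 (integer inequality)\<close>
definition Delta :: "nat \<Rightarrow> nat \<Rightarrow> (nat \<Rightarrow> nat) set" where
  "Delta r d = {e. (\<forall>i. i \<notin> {1..r} \<longrightarrow> e i = 0) \<and> int (\<Sum>i\<in>{1..r}. e i) \<le> int d - 3}"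

end

theory Submission
  imports Defs "HOL-Library.FuncSet"
begin

text \<open>The conditions on \<open>g\<close> are linear: at a point \<open>p\<close> of \<open>S(e)\<close> they say \<open>g(p) = 0\<close> and
  \<open>Dg(p)(v) = 0\<close> for \<open>v\<close> in the \<open>(N-r+1)\<close>-dimensional cone \<open>\<Theta>(e)\<close>. Extending the points of \<open>S(e)\<close>
  to a basis of \<open>\<Theta>(e)\<close> turns them into a linear "jet" map with \<open>m(N-r+1)|\<Delta>|\<close> coordinates whose
  kernel is the set in question, so it suffices to show that this map is onto.
  For the coordinate of \<open>(e, p, u)\<close> take \<open>Q\<^sub>e \<phi>\<^sub>p\<^sup>k\<^sup>-\<^sup>1 \<phi>\<^sub>u\<close>, where
  \<open>Q\<^sub>e = \<Prod>\<^sub>i \<Prod>\<^sub>j\<^sub><\<^sub>e\<^sub>i (l\<^sub>i - \<lambda>\<^sub>i\<^sub>j l\<^sub>0)\<close>, \<open>k = d - |e| \<ge> 3\<close> and \<open>\<phi>\<close> are dual forms of the basis.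
  It vanishes on every \<open>\<Theta>(e')\<close> with some \<open>e'\<^sub>i < e\<^sub>i\<close>, has no other entry in the block of \<open>e\<close> except
  (when \<open>u = p\<close>) derivatives at \<open>p\<close> along the other basis vectors, and its \<open>(e, p, u)\<close> entry is
  \<open>Q\<^sub>e(p) \<noteq> 0\<close> because \<open>p \<notin> \<Pi>\<close> and the \<open>\<lambda>\<^sub>i\<^sub>j\<close> are distinct. Hence the map is triangular
  and surjectivity follows by downward induction on \<open>|e|\<close>.\<close>

section \<open>Rank and nullity\<close>

context vector_space begin

lemma independent_span_disjoint_eq_0:
  assumes "independent B" "C \<subseteq> B" "D \<subseteq> B" "C \<inter> D = {}" "x \<in> span C" "x \<in> span D"
  shows "x = 0"
proof -
  have "representation B x = representation C x" "representation B x = representation D x"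
    using representation_extend assms by blast+
  then have zero: "representation B x b = 0" for b
    using representation_ne_zero[of C x b] representation_ne_zero[of D x b] assms(4) by auto
  have "x \<in> span B" using span_mono[OF assms(2)] assms(5) by auto
  then have "x = (\<Sum>b | representation B x b \<noteq> 0. representation B x b *s b)"
    using sum_nonzero_representation_eq[OF assms(1)] by simp
  then show ?thesis using zero by simp
qed

lemma subset_subspace_if_dim_eq:
  assumes "subspace U" "U \<subseteq> V" "finite F" "V \<subseteq> span F" "dim U = dim V"
  shows "V \<subseteq> U"
proof
  fix v assume v: "v \<in> V"
  obtain B where B: "B \<subseteq> U" "independent B" "U \<subseteq> span B" "card B = dim U"
    using basis_exists by blast
  obtain C where C: "C \<subseteq> V" "independent C" "V \<subseteq> span C" "card C = dim V"
    using basis_exists by blast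
  have fin_C: "finite C" using independent_span_bound[OF assms(3) C(2)] C(1) assms(4) by auto
  show "v \<in> U"
  proof (rule ccontr)
    assume "v \<notin> U"
    moreover have "span B \<subseteq> U" using span_minimal[OF B(1) assms(1)] .
    ultimately have v_B: "v \<notin> span B" by blast
    then have "independent (insert v B)" using B(2) by (rule independent_insertI)
    moreover have "insert v B \<subseteq> span C" using B(1) assms(2) C(3) v by blast
    ultimately have bound: "finite (insert v B) \<and> card (insert v B) \<le> card C"
      by (rule independent_span_bound[OF fin_C])
    moreover have "v \<notin> B" using v_B span_base by metis
    ultimately show False using B(4) C(4) assms(5) by auto
  qed
qed

end

context vector_space_pair begin

lemma rank_nullity:
  assumes lin: "Vector_Spaces.linear s1 s2 f" and W: "vs1.subspace W"
    and F: "finite F" "W \<subseteq> vs1.span F"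
  shows "vs1.dim W = vs1.dim {x\<in>W. f x = 0} + vs2.dim (f ` W)"
proof -
  interpret lf: Vector_Spaces.linear s1 s2 f by fact
  let ?K = "{x\<in>W. f x = 0}"
  obtain BK where BK: "BK \<subseteq> ?K" "vs1.independent BK" "?K \<subseteq> vs1.span BK" "card BK = vs1.dim ?K"
    using vs1.basis_exists by blast
  obtain B where B: "BK \<subseteq> B" "B \<subseteq> W" "vs1.independent B" "W \<subseteq> vs1.span B"
    using vs1.maximal_independent_subset_extend[of BK W] BK by auto
  have fin_B: "finite B" using vs1.independent_span_bound[OF F(1) B(3)] B(2) F(2) by auto
  let ?C = "B - BK"
  have "vs1.span ?C \<subseteq> W" using vs1.span_minimal[of ?C W] B(2) W by auto
  have inj: "inj_on f (vs1.span ?C)"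
    unfolding lf.inj_on_iff_eq_0[OF vs1.subspace_span]
  proof (intro ballI impI)
    fix x assume x: "x \<in> vs1.span ?C" "f x = 0"
    then have "x \<in> vs1.span BK" using \<open>vs1.span ?C \<subseteq> W\<close> BK(3) by auto
    then show "x = 0" using vs1.independent_span_disjoint_eq_0[OF B(3), of ?C BK x] x B(1) by auto
  qed
  have "f ` W \<subseteq> vs2.span (f ` ?C)"
  proof
    fix y assume "y \<in> f ` W"
    then obtain x where x: "x \<in> W" "y = f x" by auto
    have "?C \<union> BK = B" using B(1) by blast
    then have "x \<in> vs1.span (?C \<union> BK)" using B(4) x(1) by auto
    then obtain u v where uv: "x = u + v" "u \<in> vs1.span ?C" "v \<in> vs1.span BK"
      unfolding vs1.span_Un by blast
    have "f v = 0" using lf.eq_0_on_span[OF _ uv(3)] BK(1) by auto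
    then have "y = f u" using uv x by (simp add: lf.add)
    then show "y \<in> vs2.span (f ` ?C)" using uv(2) lf.span_image by auto
  qed
  moreover have "vs2.independent (f ` ?C)"
    using lf.independent_injective_image[OF vs1.independent_mono[OF B(3)] inj] by auto
  moreover have "card (f ` ?C) = card ?C"
    using card_image[OF inj_on_subset[OF inj vs1.span_superset]] .
  moreover have "f ` ?C \<subseteq> f ` W" using B(2) by auto
  ultimately have "vs2.dim (f ` W) = card ?C"
    using vs2.basis_card_eq_dim by metis
  moreover have "vs1.dim W = card B" using vs1.basis_card_eq_dim[OF B(2) B(4) B(3)] by simp
  moreover have "card B = card BK + card ?C"
    using fin_B B(1) card_Diff_subset[of BK B] card_mono[OF fin_B B(1)] finite_subset[OF B(1) fin_B] by simp
  ultimately show ?thesis using BK(4) by simp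
qed

end

section \<open>Complex coordinate spaces\<close>

interpretation CV: vector_space "cscale :: complex \<Rightarrow> ('a \<Rightarrow> complex) \<Rightarrow> ('a \<Rightarrow> complex)"
  by (rule vector_space_cscale)

interpretation CVP: vector_space_pair "cscale :: complex \<Rightarrow> ('a \<Rightarrow> complex) \<Rightarrow> ('a \<Rightarrow> complex)"
   "cscale :: complex \<Rightarrow> ('b \<Rightarrow> complex) \<Rightarrow> ('b \<Rightarrow> complex)"
  by unfold_locales

lemma cscale_apply [simp]: "cscale a f x = a * f x"
  by (simp add: cscale_def)

lemma sum_fun_apply: "(\<Sum>i\<in>A. f i) x = (\<Sum>i\<in>A. f i x)"
  by (induction A rule: infinite_finite_induct) auto

lemma linear_cscaleI:
  assumes "\<And>x y. f (x + y) = f x + f y" "\<And>a x. f (cscale a x) = cscale a (f x)"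
  shows "Vector_Spaces.linear (cscale :: complex \<Rightarrow> ('a \<Rightarrow> complex) \<Rightarrow> _)
           (cscale :: complex \<Rightarrow> ('b \<Rightarrow> complex) \<Rightarrow> _) f"
  unfolding Vector_Spaces.linear_iff by (simp add: assms vector_space_cscale)

lemma subspace_linear_image:
  assumes "Vector_Spaces.linear s1 s2 f" "module.subspace s1 S"
  shows "module.subspace s2 (f ` S)"
  using module_hom.subspace_image[of s1 s2 f S] assms module_hom_iff_linear by blast

lemma subspace_linear_kernel:
  assumes "Vector_Spaces.linear s1 s2 f" "module.subspace s1 S"
  shows "module.subspace s1 {x\<in>S. f x = 0}"
proof -
  have "module.subspace s1 (S \<inter> {x. f x = 0})"
    using module_hom.subspace_kernel[of s1 s2 f] module.subspace_inter[of s1] assms module_hom_iff_linear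
    by (metis module_hom.axioms(1))
  then show ?thesis by (simp add: Int_def conj_commute)
qed

definition coord_space :: "'a set \<Rightarrow> ('a \<Rightarrow> complex) set" where
  "coord_space I = {x. \<forall>i. i \<notin> I \<longrightarrow> x i = 0}"

definition coord_unit :: "'a \<Rightarrow> 'a \<Rightarrow> complex" where
  "coord_unit i = (\<lambda>j. if j = i then 1 else 0)"

lemma coord_space_expand:
  assumes "finite I" "x \<in> coord_space I"
  shows "(\<Sum>i\<in>I. cscale (x i) (coord_unit i)) = x"
proof
  fix j
  have "(\<Sum>i\<in>I. cscale (x i) (coord_unit i)) j = (\<Sum>i\<in>I. if j = i then x i else 0)"
    by (auto simp: sum_fun_apply coord_unit_def intro!: sum.cong)
  also have "\<dots> = x j" using assms by (auto simp: coord_space_def)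
  finally show "(\<Sum>i\<in>I. cscale (x i) (coord_unit i)) j = x j" .
qed

lemma subspace_coord_space: "CV.subspace (coord_space I)"
  by (auto simp: CV.subspace_def coord_space_def)

lemma coord_space_subset_span: "finite I \<Longrightarrow> coord_space I \<subseteq> CV.span (coord_unit ` I)"
proof
  fix x assume "finite I" "x \<in> coord_space I"
  then have "x = (\<Sum>i\<in>I. cscale (x i) (coord_unit i))" using coord_space_expand by metis
  also have "\<dots> \<in> CV.span (coord_unit ` I)"
    by (intro CV.span_sum CV.span_scale CV.span_base) auto
  finally show "x \<in> CV.span (coord_unit ` I)" .
qed

lemma inj_coord_unit: "inj coord_unit"
proof (rule injI)
  fix i j :: 'a assume "coord_unit i = coord_unit j"
  then have "coord_unit i i = coord_unit j i" by simp
  then show "i = j" by (auto simp: coord_unit_def split: if_splits)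
qed

lemma independent_coord_units: "CV.independent (coord_unit ` I)"
  unfolding CV.independent_explicit_module
proof (intro allI impI)
  fix t u v
  assume t: "finite t" "t \<subseteq> coord_unit ` I" and sum: "(\<Sum>v\<in>t. cscale (u v) v) = 0" and v: "v \<in> t"
  then obtain i where i: "v = coord_unit i" by auto
  have "0 = (\<Sum>w\<in>t. u w * w i)" using fun_cong[OF sum, of i] by (simp add: sum_fun_apply)
  also have "\<dots> = (\<Sum>w\<in>t. if w = v then u w else 0)"
  proof (rule sum.cong[OF refl])
    fix w assume "w \<in> t"
    then obtain j where w: "w = coord_unit j" using t by auto
    have "w = v \<longleftrightarrow> j = i" using w i by (simp add: inj_eq[OF inj_coord_unit])
    then show "u w * w i = (if w = v then u w else 0)" using w by (simp add: coord_unit_def)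
  qed
  finally show "u v = 0" using t v by simp
qed

lemma dim_coord_space: "finite I \<Longrightarrow> CV.dim (coord_space I) = card I"
proof (rule CV.dim_unique[of "coord_unit ` I"])
  show "coord_unit ` I \<subseteq> coord_space I" by (auto simp: coord_space_def coord_unit_def)
  show "card (coord_unit ` I) = card I"
    using card_image[OF inj_on_subset[OF inj_coord_unit]] by simp
qed (simp_all add: coord_space_subset_span independent_coord_units)

lemma coord_unit_in_subspace:
  assumes V: "CV.subspace V" and t: "t \<in> V" "t \<in> coord_space I" and I: "finite I" and nz: "t i \<noteq> 0"
    and others: "\<And>j. j \<in> I \<Longrightarrow> j \<noteq> i \<Longrightarrow> t j \<noteq> 0 \<Longrightarrow> coord_unit j \<in> V"
  shows "coord_unit i \<in> V"
proof -
  have "i \<in> I" using t(2) nz by (auto simp: coord_space_def)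
  have rest: "(\<Sum>j\<in>I - {i}. cscale (t j) (coord_unit j)) \<in> V"
  proof (rule CV.subspace_sum[OF V])
    fix j assume "j \<in> I - {i}"
    then show "cscale (t j) (coord_unit j) \<in> V"
      using others CV.subspace_scale[OF V] CV.subspace_0[OF V]
      by (cases "t j = 0") (auto simp: CV.scale_zero_left)
  qed
  have "t = (\<Sum>j\<in>I. cscale (t j) (coord_unit j))" using coord_space_expand[OF I t(2)] by simp
  also have "\<dots> = cscale (t i) (coord_unit i) + (\<Sum>j\<in>I - {i}. cscale (t j) (coord_unit j))"
    by (rule sum.remove[OF I \<open>i \<in> I\<close>])
  finally have "cscale (t i) (coord_unit i) = t - (\<Sum>j\<in>I - {i}. cscale (t j) (coord_unit j))"
    unfolding eq_diff_eq by (rule sym)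
  then have "cscale (t i) (coord_unit i) \<in> V"
    using CV.subspace_diff[OF V t(1) rest] by simp
  then have "cscale (inverse (t i)) (cscale (t i) (coord_unit i)) \<in> V"
    by (rule CV.subspace_scale[OF V])
  then show ?thesis using nz by (simp add: CV.scale_scale)
qed

section \<open>Homogeneous polynomial functions and their derivatives\<close>

definition mon :: "nat \<Rightarrow> (nat \<Rightarrow> nat) \<Rightarrow> (nat \<Rightarrow> complex) \<Rightarrow> complex" where
  "mon N \<alpha> x = (\<Prod>k\<le>N. x k ^ \<alpha> k)"

lemma peval_mon: "peval N d g x = (\<Sum>\<alpha>\<in>mons N d. g \<alpha> * mon N \<alpha> x)"
  by (simp add: peval_def mon_def)

lemma mon_add: "mon N (\<lambda>j. \<alpha> j + \<beta> j) x = mon N \<alpha> x * mon N \<beta> x"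
  by (simp add: mon_def power_add prod.distrib)

lemma mons_add: "\<alpha> \<in> mons N d1 \<Longrightarrow> \<beta> \<in> mons N d2 \<Longrightarrow> (\<lambda>j. \<alpha> j + \<beta> j) \<in> mons N (d1 + d2)"
  by (simp add: mons_def sum.distrib)

lemma finite_mons: "finite (mons N d)"
proof -
  let ?ext = "\<lambda>f::nat\<Rightarrow>nat. \<lambda>j. if j \<le> N then f j else 0"
  have "mons N d \<subseteq> ?ext ` (PiE {..N} (\<lambda>_. {..d}))"
  proof
    fix \<alpha> assume \<alpha>: "\<alpha> \<in> mons N d"
    have "\<alpha> j \<le> d" if "j \<le> N" for j
      using member_le_sum[of j "{..N}" \<alpha>] that \<alpha> by (simp add: mons_def)
    then have "restrict \<alpha> {..N} \<in> PiE {..N} (\<lambda>_. {..d})" by auto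
    moreover have "\<alpha> = ?ext (restrict \<alpha> {..N})" using \<alpha> by (auto simp: mons_def fun_eq_iff)
    ultimately show "\<alpha> \<in> ?ext ` (PiE {..N} (\<lambda>_. {..d}))" by blast
  qed
  then show ?thesis by (rule finite_subset) (intro finite_imageI finite_PiE; simp)
qed

lemma Pspace_eq_coord_space: "Pspace N d = coord_space (mons N d)"
  by (simp add: Pspace_def coord_space_def)

lemma peval_add: "peval N d (g1 + g2) x = peval N d g1 x + peval N d g2 x"
  by (simp add: peval_def distrib_right sum.distrib)

lemma peval_scale: "peval N d (cscale c g) x = c * peval N d g x"
  by (simp add: peval_def sum_distrib_left mult.assoc)

definition hom_polyfun :: "nat \<Rightarrow> nat \<Rightarrow> ((nat \<Rightarrow> complex) \<Rightarrow> complex) \<Rightarrow> bool" where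
  "hom_polyfun N d f \<longleftrightarrow> (\<exists>g\<in>Pspace N d. \<forall>x. peval N d g x = f x)"

lemma hom_polyfun_sum_mon:
  assumes A: "finite A" and \<beta>: "\<And>i. i \<in> A \<Longrightarrow> \<beta> i \<in> mons N d"
  shows "hom_polyfun N d (\<lambda>x. \<Sum>i\<in>A. c i * mon N (\<beta> i) x)"
proof -
  define g where "g \<alpha> = (\<Sum>i\<in>{i\<in>A. \<beta> i = \<alpha>}. c i)" for \<alpha>
  have "g \<alpha> = 0" if "\<alpha> \<notin> mons N d" for \<alpha>
    unfolding g_def using \<beta> that by (metis (mono_tags, lifting) mem_Collect_eq sum.neutral)
  then have "g \<in> Pspace N d" by (auto simp: Pspace_def)
  moreover have "peval N d g x = (\<Sum>i\<in>A. c i * mon N (\<beta> i) x)" for x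
  proof -
    have "peval N d g x = (\<Sum>\<alpha>\<in>mons N d. \<Sum>i\<in>{i\<in>A. \<beta> i = \<alpha>}. c i * mon N (\<beta> i) x)"
      unfolding peval_mon g_def sum_distrib_right by (intro sum.cong refl) auto
    also have "\<dots> = (\<Sum>i\<in>A. c i * mon N (\<beta> i) x)"
      by (rule sum.group[OF A finite_mons]) (use \<beta> in auto)
    finally show ?thesis .
  qed
  ultimately show ?thesis unfolding hom_polyfun_def by blast
qed

lemma hom_polyfun_mult:
  assumes "hom_polyfun N d1 f" "hom_polyfun N d2 h"
  shows "hom_polyfun N (d1 + d2) (\<lambda>x. f x * h x)"
proof -
  obtain g1 where g1: "\<And>x. f x = (\<Sum>\<alpha>\<in>mons N d1. g1 \<alpha> * mon N \<alpha> x)"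
    using assms(1) unfolding hom_polyfun_def peval_mon by metis
  obtain g2 where g2: "\<And>x. h x = (\<Sum>\<alpha>\<in>mons N d2. g2 \<alpha> * mon N \<alpha> x)"
    using assms(2) unfolding hom_polyfun_def peval_mon by metis
  have "f x * h x = (\<Sum>p\<in>mons N d1 \<times> mons N d2.
          (g1 (fst p) * g2 (snd p)) * mon N (\<lambda>j. fst p j + snd p j) x)" for x
    unfolding g1 g2 sum_product
    by (simp add: sum.cartesian_product mon_add mult_ac case_prod_unfold)
  moreover have "hom_polyfun N (d1 + d2) (\<lambda>x. \<Sum>p\<in>mons N d1 \<times> mons N d2.
          (g1 (fst p) * g2 (snd p)) * mon N (\<lambda>j. fst p j + snd p j) x)"
    by (rule hom_polyfun_sum_mon) (auto simp: finite_mons intro: mons_add)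
  ultimately show ?thesis by presburger
qed

lemma hom_polyfun_const: "hom_polyfun N 0 (\<lambda>x. c)"
  using hom_polyfun_sum_mon[of "{()}" "\<lambda>_. \<lambda>_. 0" N 0 "\<lambda>_. c"]
  by (simp add: mons_def mon_def)

lemma hom_polyfun_linf: "hom_polyfun N 1 (linf N c)"
proof -
  define u where "u j = (\<lambda>k::nat. if k = j then 1 else (0::nat))" for j
  have "mon N (u j) x = x j" if "j \<le> N" for j x
  proof -
    have "mon N (u j) x = (\<Prod>k\<in>{..N}. if k = j then x k else 1)"
      unfolding mon_def u_def by (intro prod.cong) auto
    then show ?thesis using that by (simp add: prod.delta)
  qed
  then have "linf N c = (\<lambda>x. \<Sum>j\<in>{..N}. c j * mon N (u j) x)"
    by (auto simp: linf_def fun_eq_iff intro!: sum.cong)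
  moreover have "hom_polyfun N 1 (\<lambda>x. \<Sum>j\<in>{..N}. c j * mon N (u j) x)"
    by (rule hom_polyfun_sum_mon) (auto simp: mons_def u_def)
  ultimately show ?thesis by simp
qed

lemma hom_polyfun_prod:
  assumes "finite A" "\<And>i. i \<in> A \<Longrightarrow> hom_polyfun N (dg i) (f i)"
  shows "hom_polyfun N (\<Sum>i\<in>A. dg i) (\<lambda>x. \<Prod>i\<in>A. f i x)"
  using assms
proof (induction A rule: finite_induct)
  case empty
  then show ?case using hom_polyfun_const[of N 1] by simp
next
  case (insert a A)
  then show ?case using hom_polyfun_mult[of N "dg a" "f a"] by simp
qed

lemma hom_polyfun_power: "hom_polyfun N d f \<Longrightarrow> hom_polyfun N (d * n) (\<lambda>x. f x ^ n)"
  using hom_polyfun_prod[of "{..<n}" N "\<lambda>_. d" "\<lambda>_. f"] by (simp add: mult.commute)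

definition line :: "(nat \<Rightarrow> complex) \<Rightarrow> (nat \<Rightarrow> complex) \<Rightarrow> complex \<Rightarrow> (nat \<Rightarrow> complex)" where
  "line p v t = (\<lambda>k. p k + t * v k)"

lemma line_in_subspace:
  assumes "CV.subspace V" "p \<in> V" "v \<in> V"
  shows "line p v t \<in> V"
proof -
  have "line p v t = p + cscale t v" by (simp add: line_def fun_eq_iff)
  then show ?thesis using assms CV.subspace_add CV.subspace_scale by metis
qed

lemma ddir_has_field_derivative:
  "((\<lambda>t. peval N d g (line p v t)) has_field_derivative ddir N d g p v) (at 0)"
proof -
  have factor: "((\<lambda>t. line p v t k ^ \<alpha> k) has_field_derivative
      of_nat (\<alpha> k) * (v k * p k ^ (\<alpha> k - 1))) (at 0)" for \<alpha> k
    unfolding line_def by (auto intro!: derivative_eq_intros)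
  have "((\<lambda>t. \<Sum>\<alpha>\<in>mons N d. g \<alpha> * (\<Prod>k\<in>{..N}. line p v t k ^ \<alpha> k)) has_field_derivative
     (\<Sum>\<alpha>\<in>mons N d. g \<alpha> * (\<Sum>j\<in>{..N}. (of_nat (\<alpha> j) * (v j * p j ^ (\<alpha> j - 1))) *
        (\<Prod>k\<in>{..N}-{j}. line p v 0 k ^ \<alpha> k)))) (at 0)"
    by (intro DERIV_sum DERIV_cmult has_field_derivative_prod factor)
  moreover have "(\<Sum>\<alpha>\<in>mons N d. g \<alpha> * (\<Sum>j\<in>{..N}. (of_nat (\<alpha> j) * (v j * p j ^ (\<alpha> j - 1))) *
        (\<Prod>k\<in>{..N}-{j}. line p v 0 k ^ \<alpha> k)))
      = (\<Sum>\<alpha>\<in>mons N d. \<Sum>j\<in>{..N}. v j * (g \<alpha> * (of_nat (\<alpha> j) * p j ^ (\<alpha> j - 1) *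
          (\<Prod>k\<in>{..N}-{j}. p k ^ \<alpha> k))))"
    by (simp add: line_def sum_distrib_left mult_ac)
  also have "\<dots> = ddir N d g p v"
    unfolding ddir_def pderiv_at_def sum_distrib_left by (rule sum.swap)
  ultimately show ?thesis unfolding peval_def by simp
qed

lemma ddir_unique:
  assumes "\<And>x. peval N d g x = f x" "((\<lambda>t. f (line p v t)) has_field_derivative D) (at 0)"
  shows "ddir N d g p v = D"
  using DERIV_unique[OF ddir_has_field_derivative[of N d g p v]] assms by simp

lemma ddir_self: "ddir N d g p p = of_nat d * peval N d g p"
proof -
  have homogeneous: "peval N d g (line p p t) = (1 + t) ^ d * peval N d g p" for t
  proof -
    have "mon N \<alpha> (line p p t) = (1 + t) ^ d * mon N \<alpha> p" if "\<alpha> \<in> mons N d" for \<alpha>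
    proof -
      have "mon N \<alpha> (line p p t) = (\<Prod>k\<le>N. (1 + t) ^ \<alpha> k * p k ^ \<alpha> k)"
        unfolding mon_def line_def by (simp add: power_mult_distrib[symmetric] algebra_simps)
      also have "\<dots> = (1 + t) ^ (\<Sum>k\<le>N. \<alpha> k) * mon N \<alpha> p"
        by (simp add: prod.distrib power_sum mon_def)
      finally show ?thesis using that by (simp add: mons_def)
    qed
    then show ?thesis unfolding peval_mon sum_distrib_left by (auto simp: mult_ac intro: sum.cong)
  qed
  have "((\<lambda>t. (1 + t) ^ d * peval N d g p) has_field_derivative of_nat d * peval N d g p) (at 0)"
    by (auto intro!: derivative_eq_intros)
  then show ?thesis using DERIV_unique[OF ddir_has_field_derivative[of N d g p p]] by (simp add: homogeneous)
qed

lemma ddir_eq_0_if_vanishes_on_subspace: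
  assumes "CV.subspace V" "p \<in> V" "v \<in> V" "\<forall>x\<in>V. peval N d g x = 0"
  shows "ddir N d g p v = 0"
proof -
  have "(\<lambda>t. peval N d g (line p v t)) = (\<lambda>t. 0)"
    using assms line_in_subspace by auto
  then show ?thesis
    using DERIV_unique[OF ddir_has_field_derivative[of N d g p v]] DERIV_const[of 0 "at 0"] by simp
qed

lemma ddir_add_dir: "ddir N d g p (x + y) = ddir N d g p x + ddir N d g p y"
  by (simp add: ddir_def distrib_right sum.distrib)

lemma ddir_scale_dir: "ddir N d g p (cscale c x) = c * ddir N d g p x"
  by (simp add: ddir_def sum_distrib_left mult.assoc)

lemma ddir_add_poly: "ddir N d (g1 + g2) p v = ddir N d g1 p v + ddir N d g2 p v"
  by (simp add: ddir_def pderiv_at_def distrib_right distrib_left sum.distrib)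

lemma ddir_scale_poly: "ddir N d (cscale c g) p v = c * ddir N d g p v"
  by (simp add: ddir_def pderiv_at_def sum_distrib_left mult_ac)

lemma ddir_eq_0_on_span:
  assumes "v \<in> CV.span B" "\<forall>u\<in>B. ddir N d g p u = 0"
  shows "ddir N d g p v = 0"
proof -
  have "ddir N d g p 0 = 0" by (simp add: ddir_def)
  then have "CV.subspace {v. ddir N d g p v = 0}"
    by (auto simp: CV.subspace_def ddir_add_dir ddir_scale_dir)
  then show ?thesis using assms CV.span_induct[of v B "\<lambda>v. ddir N d g p v = 0"] by auto
qed

lemma linf_add: "linf N c (x + y) = linf N c x + linf N c y"
  by (simp add: linf_def distrib_left sum.distrib)

lemma linf_scale: "linf N c (cscale a x) = a * linf N c x"
  by (simp add: linf_def sum_distrib_left mult_ac)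

lemma linf_diff_coeffs: "linf N (\<lambda>k. a k - c * b k) x = linf N a x - c * linf N b x"
  by (simp add: linf_def right_diff_distrib left_diff_distrib sum_subtractf sum_distrib_left mult_ac)

lemma linf_has_field_derivative: "((\<lambda>t. linf N c (line p v t)) has_field_derivative linf N c v) (at 0)"
proof -
  have "linf N c (line p v t) = linf N c p + t * linf N c v" for t
    by (simp add: linf_def line_def distrib_left sum.distrib sum_distrib_left mult_ac)
  then show ?thesis by (auto intro!: derivative_eq_intros)
qed

lemma ddir_mult_linf_power:
  assumes Q: "\<And>x. peval N d0 gQ x = Q x"
    and g: "\<And>x. peval N d g x = Q x * (linf N c1 x ^ n * linf N c2 x)"
  shows "ddir N d g p w = ddir N d0 gQ p w * (linf N c1 p ^ n * linf N c2 p) +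
     (of_nat n * (linf N c1 w * linf N c1 p ^ (n - 1)) * linf N c2 p + linf N c2 w * linf N c1 p ^ n) * Q p"
proof (rule ddir_unique[OF g])
  have "((\<lambda>t. Q (line p w t)) has_field_derivative ddir N d0 gQ p w) (at 0)"
    using ddir_has_field_derivative[of N d0 gQ p w] Q by simp
  from DERIV_mult[OF this DERIV_mult[OF DERIV_power[OF linf_has_field_derivative[of N c1 p w], of n]
        linf_has_field_derivative[of N c2 p w]]]
  show "((\<lambda>t. Q (line p w t) * (linf N c1 (line p w t) ^ n * linf N c2 (line p w t))) has_field_derivative
     ddir N d0 gQ p w * (linf N c1 p ^ n * linf N c2 p) +
     (of_nat n * (linf N c1 w * linf N c1 p ^ (n - 1)) * linf N c2 p + linf N c2 w * linf N c1 p ^ n) * Q p) (at 0)"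
    by (simp add: line_def)
qed

lemma lin_indep_inj_on:
  assumes "lin_indep N m u" shows "inj_on u {..<m}"
proof (rule inj_onI, rule ccontr)
  fix a b assume ab: "a \<in> {..<m}" "b \<in> {..<m}" "u a = u b" "a \<noteq> b"
  define c where "c k = (if k = a then 1 else if k = b then -1 else (0::complex))" for k
  have "(\<Sum>k<m. c k * u k j) = 0" for j
  proof -
    have "(\<Sum>k<m. c k * u k j) = (\<Sum>k<m. (if k = a then u a j else 0) + (if k = b then - u b j else 0))"
      by (intro sum.cong refl) (auto simp: c_def ab(4))
    also have "\<dots> = u a j - u b j" using ab by (simp add: sum.distrib)
    finally show ?thesis using ab(3) by simp
  qed
  then have "c a = 0" using assms ab(1) unfolding lin_indep_def by auto
  then show False by (simp add: c_def)
qed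

lemma lin_indep_independent:
  assumes "lin_indep N m u" shows "CV.independent (u ` {..<m})"
  unfolding CV.independent_explicit_module
proof (intro allI impI)
  fix t w v
  assume t: "finite t" "t \<subseteq> u ` {..<m}" and sum: "(\<Sum>v\<in>t. cscale (w v) v) = 0" and v: "v \<in> t"
  define K where "K = {k\<in>{..<m}. u k \<in> t}"
  have t_eq: "t = u ` K" using t by (auto simp: K_def)
  have inj: "inj_on u K" using lin_indep_inj_on[OF assms] by (rule inj_on_subset) (auto simp: K_def)
  define c where "c k = (if k \<in> K then w (u k) else 0)" for k
  have "(\<Sum>k<m. c k * u k j) = 0" for j
  proof -
    have "(\<Sum>k<m. c k * u k j) = (\<Sum>k\<in>K. w (u k) * u k j)"
      by (rule sum.mono_neutral_cong_right) (auto simp: K_def c_def)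
    also have "\<dots> = (\<Sum>v\<in>t. w v * v j)"
      unfolding t_eq by (rule sum.reindex[OF inj, symmetric, unfolded comp_def])
    also have "\<dots> = (\<Sum>v\<in>t. cscale (w v) v) j" by (simp add: sum_fun_apply)
    finally show ?thesis using sum by simp
  qed
  then have c0: "\<forall>k<m. c k = 0" using assms unfolding lin_indep_def by blast
  obtain k where k: "k \<in> K" "v = u k" using v t_eq by auto
  then have "c k = 0" using c0 by (simp add: K_def)
  then show "w v = 0" using k by (simp add: c_def)
qed

text \<open>The coefficient vector of the dual functional is read off the basis representations
  of the coordinate vectors.\<close>
lemma dual_form_exists:
  assumes B: "B \<subseteq> coord_space {..N}" "CV.independent B" and w: "w \<in> B"
  shows "\<exists>c. \<forall>x\<in>B. linf N c x = (if x = w then 1 else 0)"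
proof -
  obtain C where C: "B \<subseteq> C" "CV.independent C" "coord_space {..N} \<subseteq> CV.span C"
    by (meson CV.maximal_independent_subset_extend B)
  define c where "c j = CV.representation C (coord_unit j) w" for j
  have unit_span: "coord_unit j \<in> CV.span C" if "j \<le> N" for j
    using C(3) that by (auto simp: coord_space_def coord_unit_def)
  have "linf N c x = (if x = w then 1 else 0)" if x: "x \<in> B" for x
  proof -
    have "x \<in> coord_space {..N}" using x B(1) by blast
    then have "CV.representation C x = CV.representation C (\<Sum>j\<in>{..N}. cscale (x j) (coord_unit j))"
      using coord_space_expand[of "{..N}" x] by simp
    also have "\<dots> = (\<lambda>b. \<Sum>j\<in>{..N}. CV.representation C (cscale (x j) (coord_unit j)) b)"
      by (rule CV.representation_sum[OF C(2)]) (auto intro: CV.span_scale unit_span)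
    also have "\<dots> = (\<lambda>b. \<Sum>j\<in>{..N}. x j * CV.representation C (coord_unit j) b)"
      by (intro ext sum.cong refl) (simp add: CV.representation_scale[OF C(2) unit_span])
    finally have "CV.representation C x w = linf N c x"
      by (simp add: linf_def c_def mult.commute)
    moreover have "CV.representation C x w = (if x = w then 1 else 0)"
      using CV.representation_basis[OF C(2)] x C(1) by auto
    ultimately show ?thesis by simp
  qed
  then show ?thesis by blast
qed

section \<open>The linear sections \<open>\<Theta>(e)\<close>\<close>

locale theta_configuration =
  fixes N d r m :: nat and l lam :: "nat \<Rightarrow> nat \<Rightarrow> complex"
    and S :: "(nat \<Rightarrow> nat) \<Rightarrow> nat \<Rightarrow> nat \<Rightarrow> complex"
  assumes r_le_N: "r \<le> N"
    and forms_indep: "lin_indep N (Suc r) l"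
    and lam_inj: "\<And>i. i \<in> {1..r} \<Longrightarrow> inj_on (lam i) {..<d}"
    and points_indep: "\<And>e. e \<in> Delta r d \<Longrightarrow> lin_indep N m (S e)"
    and points_in_Theta: "\<And>e k. e \<in> Delta r d \<Longrightarrow> k < m \<Longrightarrow> S e k \<in> Theta_cone N r l lam e - Pi_cone N r l"
begin

definition theta_form :: "(nat \<Rightarrow> nat) \<Rightarrow> nat \<Rightarrow> nat \<Rightarrow> complex" where
  "theta_form e i = (\<lambda>j. l i j - lam i (e i) * l 0 j)"

lemma theta_forms_independent:
  assumes "\<forall>j\<le>N. (\<Sum>i\<in>{1..r}. b i * theta_form e i j) = 0" "i \<in> {1..r}"
  shows "b i = 0"
proof -
  define c where "c k = (if k = 0 then - (\<Sum>i\<in>{1..r}. b i * lam i (e i)) else b k)" for k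
  have "\<forall>j\<le>N. (\<Sum>k<Suc r. c k * l k j) = 0"
  proof (intro allI impI)
    fix j assume j: "j \<le> N"
    have "{..<Suc r} = insert 0 {1..r}" by auto
    then have "(\<Sum>k<Suc r. c k * l k j) = c 0 * l 0 j + (\<Sum>k\<in>{1..r}. b k * l k j)"
      by (simp add: c_def)
    also have "\<dots> = (\<Sum>i\<in>{1..r}. b i * theta_form e i j)"
      by (simp add: c_def theta_form_def sum_distrib_left sum_distrib_right right_diff_distrib
          sum_subtractf mult_ac)
    finally show "(\<Sum>k<Suc r. c k * l k j) = 0" using assms(1) j by simp
  qed
  then have "c i = 0" using forms_indep assms(2) unfolding lin_indep_def by auto
  then show "b i = 0" using assms(2) by (simp add: c_def)
qed

definition theta_map :: "(nat \<Rightarrow> nat) \<Rightarrow> (nat \<Rightarrow> complex) \<Rightarrow> nat \<Rightarrow> complex" where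
  "theta_map e x = (\<lambda>i. if i \<in> {1..r} then linf N (theta_form e i) x else 0)"

definition theta_adjoint :: "(nat \<Rightarrow> nat) \<Rightarrow> (nat \<Rightarrow> complex) \<Rightarrow> nat \<Rightarrow> complex" where
  "theta_adjoint e c = (\<lambda>j. if j \<le> N then (\<Sum>i\<in>{1..r}. c i * cnj (theta_form e i j)) else 0)"

lemma linear_theta_map: "Vector_Spaces.linear cscale cscale (theta_map e)"
  by (rule linear_cscaleI) (auto simp: theta_map_def linf_add linf_scale fun_eq_iff)

lemma linear_theta_adjoint: "Vector_Spaces.linear cscale cscale (theta_adjoint e)"
  by (rule linear_cscaleI)
     (auto simp: theta_adjoint_def fun_eq_iff sum.distrib distrib_right sum_distrib_left mult_ac)

lemma Theta_cone_eq_kernel: "Theta_cone N r l lam e = {x\<in>coord_space {..N}. theta_map e x = 0}"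
  by (auto simp: Theta_cone_def coord_space_def theta_map_def fun_eq_iff theta_form_def linf_diff_coeffs)

lemma subspace_Theta_cone: "CV.subspace (Theta_cone N r l lam e)"
  unfolding Theta_cone_eq_kernel by (rule subspace_linear_kernel[OF linear_theta_map subspace_coord_space])

text \<open>For the Gram map, \<open>\<Sum>i. cnj (c i) * theta_map e (theta_adjoint e c) i\<close> is the squared norm
  of \<open>theta_adjoint e c\<close>.\<close>
lemma theta_gram_injective:
  assumes c: "c \<in> coord_space {1..r}" and zero: "theta_map e (theta_adjoint e c) = 0"
  shows "c = 0"
proof -
  define w where "w j = (\<Sum>i\<in>{1..r}. cnj (c i) * theta_form e i j)" for j
  have adj: "j \<le> N \<Longrightarrow> theta_adjoint e c j = cnj (w j)" for j
    by (simp add: theta_adjoint_def w_def)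
  have "0 = (\<Sum>i\<in>{1..r}. cnj (c i) * theta_map e (theta_adjoint e c) i)" using zero by simp
  also have "\<dots> = (\<Sum>i\<in>{1..r}. \<Sum>j\<le>N. cnj (c i) * theta_form e i j * theta_adjoint e c j)"
    by (simp add: theta_map_def linf_def sum_distrib_left mult_ac)
  also have "\<dots> = (\<Sum>j\<le>N. w j * cnj (w j))"
    by (subst sum.swap) (simp add: w_def adj sum_distrib_right)
  also have "\<dots> = of_real (\<Sum>j\<le>N. (norm (w j))\<^sup>2)"
    by (simp only: complex_norm_square of_real_sum)
  finally have "(\<Sum>j\<le>N. (norm (w j))\<^sup>2) = 0" by (metis of_real_eq_0_iff)
  then have "\<forall>j\<le>N. w j = 0" by (subst (asm) sum_nonneg_eq_0_iff) auto
  then have "\<forall>i\<in>{1..r}. cnj (c i) = 0"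
    using theta_forms_independent[of "\<lambda>i. cnj (c i)" e] unfolding w_def by blast
  then show "c = 0" using c by (auto simp: coord_space_def fun_eq_iff)
qed

lemma theta_map_onto: "theta_map e ` coord_space {..N} = coord_space {1..r}"
proof -
  let ?H = "\<lambda>c. theta_map e (theta_adjoint e c)"
  have lin: "Vector_Spaces.linear cscale cscale ?H"
    using Vector_Spaces.linear_compose[OF linear_theta_adjoint linear_theta_map] by (simp add: o_def)
  have "theta_adjoint e 0 = 0" "theta_map e 0 = 0"
    by (simp_all add: theta_adjoint_def theta_map_def fun_eq_iff linf_def)
  then have kernel: "{c\<in>coord_space {1..r}. ?H c = 0} = {0}"
    using theta_gram_injective CV.subspace_0[OF subspace_coord_space] by auto
  have "CV.dim {0::nat\<Rightarrow>complex} = 0" by (rule CV.dim_unique[of "{}"]) (auto simp: CV.independent_empty)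
  moreover have "CV.dim (coord_space {1..r})
      = CV.dim {c\<in>coord_space {1..r}. ?H c = 0} + CV.dim (?H ` coord_space {1..r})"
    by (rule CVP.rank_nullity[OF lin subspace_coord_space, of "coord_unit ` {1..r}"])
       (simp_all add: coord_space_subset_span)
  ultimately have "CV.dim (?H ` coord_space {1..r}) = CV.dim (coord_space {1..r})"
    unfolding kernel by simp
  moreover have "?H ` coord_space {1..r} \<subseteq> coord_space {1..r}"
    by (auto simp: theta_map_def coord_space_def)
  ultimately have "coord_space {1..r} \<subseteq> ?H ` coord_space {1..r}"
    using CV.subset_subspace_if_dim_eq[OF subspace_linear_image[OF lin subspace_coord_space],
        where V = "coord_space {1..r}" and F = "coord_unit ` {1..r}"] coord_space_subset_span[of "{1..r}"] by blast
  moreover have "theta_adjoint e c \<in> coord_space {..N}" for c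
    by (simp add: theta_adjoint_def coord_space_def)
  moreover have "theta_map e x \<in> coord_space {1..r}" for x
    by (simp add: theta_map_def coord_space_def)
  ultimately show ?thesis by blast
qed

lemma dim_Theta_cone: "CV.dim (Theta_cone N r l lam e) = N + 1 - r"
proof -
  have "CV.dim (coord_space {..N})
      = CV.dim {x\<in>coord_space {..N}. theta_map e x = 0} + CV.dim (theta_map e ` coord_space {..N})"
    by (rule CVP.rank_nullity[OF linear_theta_map subspace_coord_space, of "coord_unit ` {..N}"])
       (simp_all add: coord_space_subset_span)
  then show ?thesis
    by (simp add: Theta_cone_eq_kernel[symmetric] theta_map_onto dim_coord_space)
qed

section \<open>The jet map\<close>

definition weight :: "(nat \<Rightarrow> nat) \<Rightarrow> nat" where
  "weight e = (\<Sum>i\<in>{1..r}. e i)"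

lemma weight_Delta: assumes "e \<in> Delta r d" shows "weight e + 3 \<le> d"
proof -
  have "int (weight e) \<le> int d - 3" using assms by (simp add: Delta_def weight_def)
  then show ?thesis by linarith
qed

lemma Delta_less: assumes "e \<in> Delta r d" "i \<in> {1..r}" shows "e i < d"
proof -
  have "e i \<le> weight e" unfolding weight_def using assms(2) by (intro member_le_sum) auto
  then show ?thesis using weight_Delta[OF assms(1)] by simp
qed

lemma finite_Delta: "finite (Delta r d)"
proof -
  let ?ext = "\<lambda>f::nat\<Rightarrow>nat. \<lambda>j. if j \<in> {1..r} then f j else 0"
  have "Delta r d \<subseteq> ?ext ` (PiE {1..r} (\<lambda>_. {..d}))"
  proof
    fix e assume e: "e \<in> Delta r d"
    have "restrict e {1..r} \<in> PiE {1..r} (\<lambda>_. {..d})"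
      using Delta_less[OF e] by (auto simp: less_imp_le)
    moreover have "e = ?ext (restrict e {1..r})" using e by (auto simp: Delta_def fun_eq_iff)
    ultimately show "e \<in> ?ext ` (PiE {1..r} (\<lambda>_. {..d}))" by blast
  qed
  then show ?thesis by (rule finite_subset) (intro finite_imageI finite_PiE; simp)
qed

lemma weight_less_if_dominates:
  assumes e: "e \<in> Delta r d" and e': "e' \<in> Delta r d"
    and le: "\<forall>i\<in>{1..r}. e i \<le> e' i" and ne: "e' \<noteq> e"
  shows "d - weight e' < d - weight e"
proof -
  have "\<exists>i\<in>{1..r}. e i < e' i"
  proof (rule ccontr)
    assume no_less: "\<not> ?thesis"
    have "e' i = e i" for i
    proof (cases "i \<in> {1..r}")
      case True then show ?thesis using le no_less by force
    next
      case False then show ?thesis using e e' by (simp add: Delta_def)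
    qed
    then show False using ne by auto
  qed
  then have "weight e < weight e'" unfolding weight_def by (intro sum_strict_mono_ex1) (use le in auto)
  then show ?thesis using weight_Delta[OF e'] by simp
qed

definition Q :: "(nat \<Rightarrow> nat) \<Rightarrow> (nat \<Rightarrow> complex) \<Rightarrow> complex" where
  "Q e x = (\<Prod>i\<in>{1..r}. \<Prod>j<e i. linf N (\<lambda>k. l i k - lam i j * l 0 k) x)"

lemma hom_polyfun_Q: "hom_polyfun N (weight e) (Q e)"
proof -
  have "hom_polyfun N (e i) (\<lambda>x. \<Prod>j<e i. linf N (\<lambda>k. l i k - lam i j * l 0 k) x)" for i
    using hom_polyfun_prod[of "{..<e i}" N "\<lambda>_. 1"] hom_polyfun_linf by simp
  then show ?thesis
    unfolding weight_def Q_def[abs_def] by (intro hom_polyfun_prod) auto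
qed

lemma Q_vanishes:
  assumes "i \<in> {1..r}" "e' i < e i" "x \<in> Theta_cone N r l lam e'"
  shows "Q e x = 0"
proof -
  have "linf N (\<lambda>k. l i k - lam i (e' i) * l 0 k) x = 0"
    using assms(1,3) by (simp add: Theta_cone_def linf_diff_coeffs)
  then have "(\<Prod>j<e i. linf N (\<lambda>k. l i k - lam i j * l 0 k) x) = 0"
    using assms(2) by (intro prod_zero) auto
  then show ?thesis unfolding Q_def using assms(1) by (intro prod_zero) auto
qed

lemma Q_nonzero:
  assumes e: "e \<in> Delta r d" and x: "x \<in> Theta_cone N r l lam e - Pi_cone N r l"
  shows "Q e x \<noteq> 0"
proof -
  have Theta: "linf N (l i) x = lam i (e i) * linf N (l 0) x" if "i \<in> {1..r}" for i
    using x that by (auto simp: Theta_cone_def)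
  have "linf N (l 0) x \<noteq> 0"
  proof
    assume "linf N (l 0) x = 0"
    then have "linf N (l i) x = 0" if "i \<le> r" for i
      using Theta that by (cases "i = 0") auto
    then show False using x by (auto simp: Theta_cone_def Pi_cone_def)
  qed
  moreover have "lam i (e i) \<noteq> lam i j" if "i \<in> {1..r}" "j < e i" for i j
    using inj_onD[OF lam_inj[OF that(1)]] Delta_less[OF e that(1)] that(2) by fastforce
  ultimately show ?thesis
    by (auto simp: Q_def linf_diff_coeffs Theta left_diff_distrib[symmetric])
qed

lemma Theta_basis_exists:
  assumes e: "e \<in> Delta r d"
  shows "\<exists>B. S e ` {..<m} \<subseteq> B \<and> B \<subseteq> Theta_cone N r l lam e \<and> CV.independent B \<and>
     Theta_cone N r l lam e \<subseteq> CV.span B \<and> finite B \<and> card B = N + 1 - r"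
proof -
  have "S e ` {..<m} \<subseteq> Theta_cone N r l lam e" using points_in_Theta[OF e] by auto
  then obtain B where B: "S e ` {..<m} \<subseteq> B" "B \<subseteq> Theta_cone N r l lam e" "CV.independent B"
      "Theta_cone N r l lam e \<subseteq> CV.span B"
    using CV.maximal_independent_subset_extend lin_indep_independent[OF points_indep[OF e]] by metis
  have "card B = N + 1 - r" using CV.basis_card_eq_dim[OF B(2) B(4) B(3)] dim_Theta_cone by simp
  moreover from this have "finite B" using r_le_N by (intro card_ge_0_finite) simp
  ultimately show ?thesis using B by blast
qed

definition Theta_basis :: "(nat \<Rightarrow> nat) \<Rightarrow> (nat \<Rightarrow> complex) set" where
  "Theta_basis e = (SOME B. S e ` {..<m} \<subseteq> B \<and> B \<subseteq> Theta_cone N r l lam e \<and> CV.independent B \<and>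
     Theta_cone N r l lam e \<subseteq> CV.span B \<and> finite B \<and> card B = N + 1 - r)"

lemma Theta_basis:
  assumes "e \<in> Delta r d"
  shows "S e ` {..<m} \<subseteq> Theta_basis e" "Theta_basis e \<subseteq> Theta_cone N r l lam e"
    "CV.independent (Theta_basis e)" "Theta_cone N r l lam e \<subseteq> CV.span (Theta_basis e)"
    "finite (Theta_basis e)" "card (Theta_basis e) = N + 1 - r"
  using someI_ex[OF Theta_basis_exists[OF assms]] unfolding Theta_basis_def[symmetric] by blast+

definition dual_form :: "(nat \<Rightarrow> nat) \<Rightarrow> (nat \<Rightarrow> complex) \<Rightarrow> nat \<Rightarrow> complex" where
  "dual_form e w = (SOME c. \<forall>x\<in>Theta_basis e. linf N c x = (if x = w then 1 else 0))"

lemma linf_dual_form: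
  assumes "e \<in> Delta r d" "w \<in> Theta_basis e" "x \<in> Theta_basis e"
  shows "linf N (dual_form e w) x = (if x = w then 1 else 0)"
proof -
  have "Theta_basis e \<subseteq> coord_space {..N}"
    using Theta_basis(2)[OF assms(1)] by (auto simp: Theta_cone_def coord_space_def)
  then have "\<exists>c. \<forall>x\<in>Theta_basis e. linf N c x = (if x = w then 1 else 0)"
    using dual_form_exists Theta_basis(3)[OF assms(1)] assms(2) by blast
  then have "\<forall>x\<in>Theta_basis e. linf N (dual_form e w) x = (if x = w then 1 else 0)"
    unfolding dual_form_def by (rule someI_ex)
  then show ?thesis using assms(3) by blast
qed

lemma points_eq_iff: "e \<in> Delta r d \<Longrightarrow> a < m \<Longrightarrow> c < m \<Longrightarrow> S e c = S e a \<longleftrightarrow> c = a"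
  using lin_indep_inj_on[OF points_indep] by (auto dest: inj_onD)

lemma linf_dual_form_point:
  assumes "e \<in> Delta r d" "a < m" "c < m"
  shows "linf N (dual_form e (S e a)) (S e c) = (if c = a then 1 else 0)"
proof -
  have "S e c \<in> Theta_basis e" "S e a \<in> Theta_basis e" using Theta_basis(1)[OF assms(1)] assms(2,3) by auto
  then show ?thesis using linf_dual_form[OF assms(1)] points_eq_iff[OF assms] by simp
qed

text \<open>By Euler's formula \<open>Dg(p)(p) = d g(p)\<close>, so recording \<open>g(p)\<close> in place of the derivative along
  the basis vector \<open>p\<close> loses nothing.\<close>
definition jet_index :: "((nat \<Rightarrow> nat) \<times> nat \<times> (nat \<Rightarrow> complex)) set" where
  "jet_index = Sigma (Delta r d) (\<lambda>e. {..<m} \<times> Theta_basis e)"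

definition jet :: "((nat \<Rightarrow> nat) \<Rightarrow> complex) \<Rightarrow> (nat \<Rightarrow> nat) \<times> nat \<times> (nat \<Rightarrow> complex) \<Rightarrow> complex" where
  "jet g = (\<lambda>(e, a, u). if (e, a, u) \<in> jet_index then
              (if u = S e a then peval N d g (S e a) else ddir N d g (S e a) u) else 0)"

lemma linear_jet: "Vector_Spaces.linear cscale cscale jet"
  by (rule linear_cscaleI)
     (auto simp: jet_def fun_eq_iff peval_add peval_scale ddir_add_poly ddir_scale_poly split: prod.splits)

lemma finite_jet_index: "finite jet_index"
  unfolding jet_index_def using finite_Delta Theta_basis(5) by (intro finite_SigmaI) auto

lemma card_jet_index: "card jet_index = m * (N - r + 1) * card (Delta r d)"
proof -
  have "card jet_index = (\<Sum>e\<in>Delta r d. card ({..<m} \<times> Theta_basis e))"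
    unfolding jet_index_def using finite_Delta Theta_basis(5) by (intro card_SigmaI) auto
  also have "\<dots> = (\<Sum>e\<in>Delta r d. m * (N - r + 1))"
    using Theta_basis(6) r_le_N by (intro sum.cong refl) (simp add: card_cartesian_product Suc_diff_le)
  finally show ?thesis by simp
qed

lemma jet_in_coord_space: "jet g \<in> coord_space jet_index"
  by (auto simp: jet_def coord_space_def)

lemma subspace_Pspace: "CV.subspace (Pspace N d)"
  unfolding Pspace_eq_coord_space by (rule subspace_coord_space)

lemma subspace_jet_image: "CV.subspace (jet ` Pspace N d)"
  by (rule subspace_linear_image[OF linear_jet subspace_Pspace])

lemma kernel_jet:
  "{g \<in> Pspace N d. jet g = 0} =
   {g \<in> Pspace N d. \<forall>e\<in>Delta r d. \<forall>k<m. sing_at N d g (Theta_cone N r l lam e) (S e k)}"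
proof -
  have "jet g = 0 \<longleftrightarrow> (\<forall>e\<in>Delta r d. \<forall>k<m. sing_at N d g (Theta_cone N r l lam e) (S e k))" for g
  proof
    assume jet0: "jet g = 0"
    show "\<forall>e\<in>Delta r d. \<forall>k<m. sing_at N d g (Theta_cone N r l lam e) (S e k)"
    proof (intro ballI allI impI)
      fix e k assume e: "e \<in> Delta r d" and k: "k < m"
      have "S e k \<in> Theta_basis e" using Theta_basis(1)[OF e] k by auto
      then have g_zero: "peval N d g (S e k) = 0"
        using fun_cong[OF jet0, of "(e, k, S e k)"] e k by (simp add: jet_def jet_index_def)
      have "ddir N d g (S e k) u = 0" if "u \<in> Theta_basis e" for u
        using fun_cong[OF jet0, of "(e, k, u)"] e k that ddir_self g_zero
        by (cases "u = S e k") (auto simp: jet_def jet_index_def)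
      then have "ddir N d g (S e k) v = 0" if "v \<in> Theta_cone N r l lam e" for v
        using ddir_eq_0_on_span Theta_basis(4)[OF e] that by blast
      then show "sing_at N d g (Theta_cone N r l lam e) (S e k)"
        using points_in_Theta[OF e k] g_zero by (simp add: sing_at_def)
    qed
  next
    assume "\<forall>e\<in>Delta r d. \<forall>k<m. sing_at N d g (Theta_cone N r l lam e) (S e k)"
    then show "jet g = 0"
      using Theta_basis(2) by (fastforce simp: jet_def jet_index_def sing_at_def fun_eq_iff)
  qed
  then show ?thesis by blast
qed

lemma jet_vanishes_below:
  assumes g: "\<And>x. peval N d g x = Q e x * h x" and x: "(e', c, w) \<in> jet_index"
    and i: "i \<in> {1..r}" "e' i < e i"
  shows "jet g (e', c, w) = 0"
proof -
  have e': "e' \<in> Delta r d" and c: "c < m" and w: "w \<in> Theta_basis e'"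
    using x by (auto simp: jet_index_def)
  have vanish: "\<forall>x\<in>Theta_cone N r l lam e'. peval N d g x = 0"
    using Q_vanishes[where e=e and e'=e', OF i] g by simp
  have "S e' c \<in> Theta_cone N r l lam e'" using points_in_Theta[OF e' c] by blast
  moreover have "w \<in> Theta_cone N r l lam e'" using Theta_basis(2)[OF e'] w by blast
  ultimately show ?thesis
    using ddir_eq_0_if_vanishes_on_subspace[OF subspace_Theta_cone] vanish by (simp add: jet_def)
qed

lemma witness_exists:
  assumes "e \<in> Delta r d"
  obtains g where "g \<in> Pspace N d"
    "\<And>x. peval N d g x = Q e x *
       (linf N (dual_form e (S e a)) x ^ (d - weight e - 1) * linf N (dual_form e u) x)"
proof -
  have "weight e + (1 * (d - weight e - 1) + 1) = d" using weight_Delta[OF assms] by simp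
  then have "hom_polyfun N d (\<lambda>x. Q e x *
       (linf N (dual_form e (S e a)) x ^ (d - weight e - 1) * linf N (dual_form e u) x))"
    using hom_polyfun_mult[OF hom_polyfun_Q
        hom_polyfun_mult[OF hom_polyfun_power[OF hom_polyfun_linf] hom_polyfun_linf]] by metis
  then show ?thesis using that unfolding hom_polyfun_def by metis
qed

context
  fixes e a u g n
  assumes e: "e \<in> Delta r d" and a: "a < m" and u: "u \<in> Theta_basis e" and n: "2 \<le> n"
    and g: "\<And>x. peval N d g x = Q e x * (linf N (dual_form e (S e a)) x ^ n * linf N (dual_form e u) x)"
begin

lemma ddir_witness:
  "\<exists>DQ. ddir N d g p w = DQ * (linf N (dual_form e (S e a)) p ^ n * linf N (dual_form e u) p) +
     (of_nat n * (linf N (dual_form e (S e a)) w * linf N (dual_form e (S e a)) p ^ (n - 1))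
        * linf N (dual_form e u) p + linf N (dual_form e u) w * linf N (dual_form e (S e a)) p ^ n)
     * Q e p"
proof -
  obtain gQ where "\<And>x. peval N (weight e) gQ x = Q e x"
    using hom_polyfun_Q unfolding hom_polyfun_def by metis
  from ddir_mult_linf_power[OF this g] show ?thesis by blast
qed

lemma jet_witness_other_point:
  assumes c: "c < m" "c \<noteq> a" and w: "w \<in> Theta_basis e"
  shows "jet g (e, c, w) = 0"
proof -
  have "linf N (dual_form e (S e a)) (S e c) = 0" using linf_dual_form_point[OF e a c(1)] c(2) by simp
  then show ?thesis
    using ddir_witness[of "S e c" w] g c w e n by (auto simp: jet_def jet_index_def power_0_left)
qed

lemma jet_witness_same_point:
  assumes u_ne: "u \<noteq> S e a" and w: "w \<in> Theta_basis e"
  shows "jet g (e, a, w) = (if w = u then Q e (S e a) else 0)"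
proof -
  have p: "S e a \<in> Theta_basis e" using Theta_basis(1)[OF e] a by auto
  have "linf N (dual_form e (S e a)) (S e a) = 1" "linf N (dual_form e u) (S e a) = 0"
    "linf N (dual_form e u) w = (if w = u then 1 else 0)"
    using linf_dual_form[OF e] p u w u_ne by auto
  then show ?thesis
    using ddir_witness[of "S e a" w] g e a w u_ne by (auto simp: jet_def jet_index_def)
qed

lemma jet_witness_diagonal: "jet g (e, a, u) = Q e (S e a)"
proof (cases "u = S e a")
  case True
  then have "linf N (dual_form e u) (S e a) = 1" "linf N (dual_form e (S e a)) (S e a) = 1"
    using linf_dual_form_point[OF e a a] by simp_all
  then show ?thesis using True g e a u by (simp add: jet_def jet_index_def)
next
  case False
  then show ?thesis using jet_witness_same_point[OF False u] by simp
qed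

end

lemma coord_unit_in_jet_image_step:
  assumes e: "e \<in> Delta r d" and a: "a < m" and u: "u \<in> Theta_basis e"
    and higher: "\<And>e' c w. (e', c, w) \<in> jet_index \<Longrightarrow> \<forall>i\<in>{1..r}. e i \<le> e' i \<Longrightarrow> e' \<noteq> e \<Longrightarrow>
      coord_unit (e', c, w) \<in> jet ` Pspace N d"
    and same_point: "\<And>w. u = S e a \<Longrightarrow> w \<in> Theta_basis e \<Longrightarrow> w \<noteq> S e a \<Longrightarrow>
      coord_unit (e, a, w) \<in> jet ` Pspace N d"
  shows "coord_unit (e, a, u) \<in> jet ` Pspace N d"
proof -
  obtain g where g: "g \<in> Pspace N d" "\<And>x. peval N d g x = Q e x *
       (linf N (dual_form e (S e a)) x ^ (d - weight e - 1) * linf N (dual_form e u) x)"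
    using witness_exists[OF e] by blast
  have n: "2 \<le> d - weight e - 1" using weight_Delta[OF e] by simp
  show ?thesis
  proof (rule coord_unit_in_subspace[OF subspace_jet_image _ jet_in_coord_space finite_jet_index])
    show "jet g \<in> jet ` Pspace N d" using g(1) by blast
    show "jet g (e, a, u) \<noteq> 0"
      using jet_witness_diagonal[OF e a u n g(2)] Q_nonzero[OF e points_in_Theta[OF e a]] by simp
  next
    fix x assume x: "x \<in> jet_index" "x \<noteq> (e, a, u)" "jet g x \<noteq> 0"
    obtain e' c w where x_eq: "x = (e', c, w)" by (cases x)
    have c: "c < m" and w: "w \<in> Theta_basis e'" using x(1) x_eq by (auto simp: jet_index_def)
    show "coord_unit x \<in> jet ` Pspace N d"
    proof (cases "\<forall>i\<in>{1..r}. e i \<le> e' i")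
      case False
      then show ?thesis using jet_vanishes_below[OF g(2)] x x_eq by (meson not_le)
    next
      case True
      show ?thesis
      proof (cases "e' = e")
        case e'_eq: True
        then have w: "w \<in> Theta_basis e" using w by simp
        have "c = a" using jet_witness_other_point[OF e a u n g(2) c _ w] x(3) x_eq e'_eq by blast
        moreover have "u = S e a"
          using jet_witness_same_point[OF e a u n g(2) _ w] x e'_eq x_eq \<open>c = a\<close> by auto
        ultimately show ?thesis using same_point w x e'_eq x_eq by auto
      next
        case False
        then show ?thesis using higher True x(1) x_eq by simp
      qed
    qed
  qed
qed

lemma coord_unit_in_jet_image:
  assumes "(e, a, u) \<in> jet_index"
  shows "coord_unit (e, a, u) \<in> jet ` Pspace N d"
  using assms
proof (induction "d - weight e" arbitrary: e a u rule: less_induct)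
  case less
  have e: "e \<in> Delta r d" and a: "a < m" and u: "u \<in> Theta_basis e"
    using less.prems by (auto simp: jet_index_def)
  have higher: "coord_unit (e', c, w) \<in> jet ` Pspace N d"
    if "(e', c, w) \<in> jet_index" "\<forall>i\<in>{1..r}. e i \<le> e' i" "e' \<noteq> e" for e' c w
    using less.hyps[OF weight_less_if_dominates[OF e _ that(2,3)] that(1)] that(1)
    by (simp add: jet_index_def)
  have "coord_unit (e, a, w) \<in> jet ` Pspace N d" if "w \<in> Theta_basis e" "w \<noteq> S e a" for w
    using coord_unit_in_jet_image_step[OF e a that(1) higher] that(2) by blast
  then show ?case using coord_unit_in_jet_image_step[OF e a u higher] by blast
qed

lemma jet_image: "jet ` Pspace N d = coord_space jet_index"
proof
  show "jet ` Pspace N d \<subseteq> coord_space jet_index" using jet_in_coord_space by blast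
  have "coord_unit ` jet_index \<subseteq> jet ` Pspace N d" using coord_unit_in_jet_image by auto
  then have "CV.span (coord_unit ` jet_index) \<subseteq> jet ` Pspace N d"
    by (rule CV.span_minimal[OF _ subspace_jet_image])
  then show "coord_space jet_index \<subseteq> jet ` Pspace N d"
    using coord_space_subset_span[OF finite_jet_index] by blast
qed

theorem codim_singular_subspace:
  "CV.subspace {g \<in> Pspace N d. \<forall>e\<in>Delta r d. \<forall>k<m. sing_at N d g (Theta_cone N r l lam e) (S e k)}
   \<and> CV.dim (Pspace N d) = CV.dim {g \<in> Pspace N d. \<forall>e\<in>Delta r d. \<forall>k<m. sing_at N d g (Theta_cone N r l lam e) (S e k)}
       + m * (N - r + 1) * card (Delta r d)"
proof -
  have "CV.dim (Pspace N d) = CV.dim {g \<in> Pspace N d. jet g = 0} + CV.dim (jet ` Pspace N d)"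
    by (rule CVP.rank_nullity[OF linear_jet subspace_Pspace, of "coord_unit ` mons N d"])
       (simp_all add: finite_mons Pspace_eq_coord_space coord_space_subset_span)
  moreover have "CV.dim (jet ` Pspace N d) = m * (N - r + 1) * card (Delta r d)"
    by (simp add: jet_image dim_coord_space finite_jet_index card_jet_index)
  ultimately show ?thesis
    using subspace_linear_kernel[OF linear_jet subspace_Pspace] by (simp add: kernel_jet)
qed

end

theorem proposition2p2:
  fixes N d r m :: nat
    and l :: "nat \<Rightarrow> nat \<Rightarrow> complex"
    and lam :: "nat \<Rightarrow> nat \<Rightarrow> complex"
    and S :: "(nat \<Rightarrow> nat) \<Rightarrow> nat \<Rightarrow> nat \<Rightarrow> complex"
  assumes "N \<ge> 2" and "d \<ge> 1" and "1 \<le> r" and "r \<le> N"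
    and "lin_indep N (Suc r) l"
    and "\<forall>i\<in>{1..r}. inj_on (lam i) {..<d} \<and> lam i 0 = 0"
    and "int m \<le> int N - int r + 1"
    and "\<forall>e\<in>Delta r d. lin_indep N m (S e) \<and>
           (\<forall>k<m. S e k \<in> Theta_cone N r l lam e - Pi_cone N r l)"
  shows "module.subspace cscale
           {g \<in> Pspace N d. \<forall>e\<in>Delta r d. \<forall>k<m. sing_at N d g (Theta_cone N r l lam e) (S e k)}
       \<and> vector_space.dim cscale (Pspace N d)
         = vector_space.dim cscale
             {g \<in> Pspace N d. \<forall>e\<in>Delta r d. \<forall>k<m. sing_at N d g (Theta_cone N r l lam e) (S e k)}
           + m * (N - r + 1) * card (Delta r d)"
proof -
  interpret theta_configuration N d r m l lam S
    using assms by unfold_locales auto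
  show ?thesis by (rule codim_singular_subspace)
qed

end
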